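(* Let $K$ be an algebraically closed field of characteristic zero, $\deg_1$ the standard homogeneous degree on $K[x_1,\dots,x_n]$, $\Phi=(f_1,\dots,f_n)$ a polynomial automorphism of $K^n$, $d_i=\deg_1(f_i)$, $\deg_2$ the weighted degree with weights $d_i$ on $x_i$, and $I=\{Q : Q(\overline{f_1},\dots,\overline{f_n})=0\}$. If $P\in K[x_1,\dots,x_n]$ satisfies $\deg_1(P\circ\Phi)=1$, then $\tilde P\in I$ unless $P$ is affine, i.e. $\deg_1(P)\le 1$.
   Context: $\overline{f}$ denotes the homogeneous component of highest degree of $f$, and $\tilde P$ denotes the leading term of $P$ with respect to $\deg_2$. *)

theory Defs
  imports "HOL-Library.Poly_Mapping" "HOL-Computational_Algebra.Polynomial"
begin

text \<open>Multivariate polynomials over 'a: finitely supported maps from monomials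
 (exponent vectors, variable i = x_(i+1)) to coefficients.\<close>

type_synonym 'a mpoly = "(nat \<Rightarrow>\<^sub>0 nat) \<Rightarrow>\<^sub>0 'a"

definition Var :: "nat \<Rightarrow> 'a::comm_ring_1 mpoly" where
  "Var i = Poly_Mapping.single (Poly_Mapping.single i 1) 1"

definition Const :: "'a::comm_ring_1 \<Rightarrow> 'a mpoly" where
  "Const c = Poly_Mapping.single 0 c"

definition mvars :: "'a::zero mpoly \<Rightarrow> nat set" where
  "mvars P = (\<Union>m\<in>Poly_Mapping.keys P. Poly_Mapping.keys m)"

definition in_ring :: "nat \<Rightarrow> 'a::zero mpoly \<Rightarrow> bool" where
  "in_ring n P \<longleftrightarrow> mvars P \<subseteq> {..<n}"

definition wdeg_mon :: "(nat \<Rightarrow> nat) \<Rightarrow> (nat \<Rightarrow>\<^sub>0 nat) \<Rightarrow> nat" where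
  "wdeg_mon w m = (\<Sum>i\<in>Poly_Mapping.keys m. w i * Poly_Mapping.lookup m i)"

text \<open>weighted degree of a polynomial (0 for the zero polynomial)\<close>
definition wdeg :: "(nat \<Rightarrow> nat) \<Rightarrow> 'a::zero mpoly \<Rightarrow> nat" where
  "wdeg w P = Max (insert 0 (wdeg_mon w ` Poly_Mapping.keys P))"

definition deg1 :: "'a::zero mpoly \<Rightarrow> nat" where
  "deg1 P = wdeg (\<lambda>_. 1) P"

definition lead_form :: "(nat \<Rightarrow> nat) \<Rightarrow> 'a::comm_ring_1 mpoly \<Rightarrow> 'a mpoly" where
  "lead_form w P = (\<Sum>m\<in>{m\<in>Poly_Mapping.keys P. wdeg_mon w m = wdeg w P}. Poly_Mapping.single m (Poly_Mapping.lookup P m))"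

definition hcomp :: "'a::comm_ring_1 mpoly \<Rightarrow> 'a mpoly" where
  "hcomp f = lead_form (\<lambda>_. 1) f"

definition subst :: "(nat \<Rightarrow> 'a::comm_ring_1 mpoly) \<Rightarrow> 'a mpoly \<Rightarrow> 'a mpoly" where
  "subst F P = (\<Sum>m\<in>Poly_Mapping.keys P. Const (Poly_Mapping.lookup P m) * (\<Prod>i\<in>Poly_Mapping.keys m. F i ^ Poly_Mapping.lookup m i))"

definition poly_automorphism :: "nat \<Rightarrow> (nat \<Rightarrow> 'a::comm_ring_1 mpoly) \<Rightarrow> bool" where
  "poly_automorphism n F \<longleftrightarrow> (\<forall>i<n. in_ring n (F i)) \<and>
     (\<exists>G. (\<forall>i<n. in_ring n (G i)) \<and>
          (\<forall>i<n. subst G (F i) = Var i) \<and> (\<forall>i<n. subst F (G i) = Var i))"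

definition alg_closed :: "'a::field itself \<Rightarrow> bool" where
  "alg_closed _ \<longleftrightarrow> (\<forall>p::'a poly. degree p \<ge> 1 \<longrightarrow> (\<exists>x. poly p x = 0))"

end

theory Submission imports Defs begin

text \<open>Give \<open>x\<^sub>i\<close> the weight \<open>d\<^sub>i = deg\<^sub>1 f\<^sub>i\<close>. Since top-degree components of products
  multiply, substituting \<open>\<Phi>\<close> into a polynomial of weighted degree \<open>D\<close> gives a polynomial of
  standard degree at most \<open>D\<close> whose degree-\<open>D\<close> component is the leading form of \<open>P\<close> evaluated
  at the top components of the \<open>f\<^sub>i\<close>. If \<open>deg\<^sub>2 P \<ge> 2\<close>, that component of \<open>P \<circ> \<Phi>\<close> is zero because
  \<open>deg\<^sub>1 (P \<circ> \<Phi>) = 1\<close>. Otherwise \<open>deg\<^sub>1 P \<le> deg\<^sub>2 P \<le> 1\<close>, as every \<open>d\<^sub>i \<ge> 1\<close> for an automorphism.\<close>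

definition weighted_part :: "(nat \<Rightarrow> nat) \<Rightarrow> nat \<Rightarrow> 'a::comm_ring_1 mpoly \<Rightarrow> 'a mpoly" where
  "weighted_part w k Q = (\<Sum>m\<in>{m\<in>Poly_Mapping.keys Q. wdeg_mon w m = k}.
      Poly_Mapping.single m (Poly_Mapping.lookup Q m))"

definition wdeg_le :: "(nat \<Rightarrow> nat) \<Rightarrow> nat \<Rightarrow> 'a::zero mpoly \<Rightarrow> bool" where
  "wdeg_le w e Q \<longleftrightarrow> (\<forall>m\<in>Poly_Mapping.keys Q. wdeg_mon w m \<le> e)"

definition subst_monom :: "(nat \<Rightarrow> 'a::comm_ring_1 mpoly) \<Rightarrow> (nat \<Rightarrow>\<^sub>0 nat) \<Rightarrow> 'a mpoly" where
  "subst_monom F m = (\<Prod>i\<in>Poly_Mapping.keys m. F i ^ Poly_Mapping.lookup m i)"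

lemma subst_eq_sum_subst_monom:
  "subst F P = (\<Sum>m\<in>Poly_Mapping.keys P. Const (Poly_Mapping.lookup P m) * subst_monom F m)"
  unfolding subst_def subst_monom_def ..

lemma lead_form_eq_weighted_part: "lead_form w P = weighted_part w (wdeg w P) P"
  unfolding lead_form_def weighted_part_def ..

lemma hcomp_eq_weighted_part: "hcomp f = weighted_part (\<lambda>_. 1) (deg1 f) f"
  unfolding hcomp_def deg1_def lead_form_eq_weighted_part ..

lemma wdeg_mon_zero [simp]: "wdeg_mon w 0 = 0"
  by (simp add: wdeg_mon_def)

lemma wdeg_mon_superset:
  "finite S \<Longrightarrow> Poly_Mapping.keys m \<subseteq> S \<Longrightarrow> wdeg_mon w m = (\<Sum>i\<in>S. w i * Poly_Mapping.lookup m i)"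
  unfolding wdeg_mon_def by (rule sum.mono_neutral_left) (auto simp: in_keys_iff)

lemma wdeg_mon_add: "wdeg_mon w (x + y) = wdeg_mon w x + wdeg_mon w y"
proof -
  let ?S = "Poly_Mapping.keys x \<union> Poly_Mapping.keys y"
  have "wdeg_mon w (x + y) = (\<Sum>i\<in>?S. w i * Poly_Mapping.lookup (x + y) i)"
    by (rule wdeg_mon_superset) (use keys_add[of x y] in auto)
  also have "\<dots> = (\<Sum>i\<in>?S. w i * Poly_Mapping.lookup x i) + (\<Sum>i\<in>?S. w i * Poly_Mapping.lookup y i)"
    by (simp add: lookup_add distrib_left sum.distrib)
  also have "\<dots> = wdeg_mon w x + wdeg_mon w y"
    by (subst (1 2) wdeg_mon_superset) auto
  finally show ?thesis .
qed

lemma wdeg_mon_mono: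
  assumes "\<And>i. i \<in> Poly_Mapping.keys m \<Longrightarrow> v i \<le> w i"
  shows "wdeg_mon v m \<le> wdeg_mon w m"
  unfolding wdeg_mon_def using assms by (intro sum_mono mult_right_mono) auto

lemma wdeg_mon_le_wdeg: "m \<in> Poly_Mapping.keys P \<Longrightarrow> wdeg_mon w m \<le> wdeg w P"
  unfolding wdeg_def by (rule Max_ge) auto

lemma wdeg_le_wdeg: "wdeg_le w (wdeg w P) P"
  unfolding wdeg_le_def using wdeg_mon_le_wdeg by blast

lemma wdeg_le_iff: "wdeg_le w e P \<longleftrightarrow> wdeg w P \<le> e"
  unfolding wdeg_le_def wdeg_def by (subst Max_le_iff) auto

lemma deg1_le_wdeg:
  assumes "\<And>i. i \<in> mvars P \<Longrightarrow> 1 \<le> d i"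
  shows "deg1 P \<le> wdeg d P"
  unfolding deg1_def wdeg_le_iff[symmetric] wdeg_le_def
proof
  fix m assume m: "m \<in> Poly_Mapping.keys P"
  have "wdeg_mon (\<lambda>_. 1) m \<le> wdeg_mon d m"
    using m assms by (intro wdeg_mon_mono) (auto simp: mvars_def)
  also have "\<dots> \<le> wdeg d P"
    using m by (rule wdeg_mon_le_wdeg)
  finally show "wdeg_mon (\<lambda>_. 1) m \<le> wdeg d P" .
qed

lemma keys_mult_wdeg_mon:
  assumes "m \<in> Poly_Mapping.keys (X * Y)"
  obtains a b where "a \<in> Poly_Mapping.keys X" "b \<in> Poly_Mapping.keys Y"
    "wdeg_mon w m = wdeg_mon w a + wdeg_mon w b"
  using keys_mult[of X Y] assms by (auto simp: wdeg_mon_add)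

lemma wdeg_le_mult:
  fixes A B :: "'a::comm_ring_1 mpoly"
  assumes "wdeg_le w a A" "wdeg_le w b B"
  shows "wdeg_le w (a + b) (A * B)"
  unfolding wdeg_le_def
proof
  fix m assume "m \<in> Poly_Mapping.keys (A * B)"
  then obtain x y where "x \<in> Poly_Mapping.keys A" "y \<in> Poly_Mapping.keys B"
    "wdeg_mon w m = wdeg_mon w x + wdeg_mon w y"
    by (rule keys_mult_wdeg_mon)
  with assms show "wdeg_mon w m \<le> a + b"
    unfolding wdeg_le_def by (metis add_mono)
qed

lemma wdeg_le_power:
  fixes A :: "'a::comm_ring_1 mpoly"
  assumes "wdeg_le w a A"
  shows "wdeg_le w (k * a) (A ^ k)"
proof (induction k)
  case 0
  then show ?case by (simp add: wdeg_le_def)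
next
  case (Suc k)
  then show ?case using wdeg_le_mult[OF assms] by simp
qed

lemma wdeg_le_prod:
  fixes F :: "nat \<Rightarrow> 'a::comm_ring_1 mpoly"
  assumes "\<And>i. i \<in> S \<Longrightarrow> wdeg_le w (a i) (F i)"
  shows "wdeg_le w (\<Sum>i\<in>S. a i) (\<Prod>i\<in>S. F i)"
  using assms
proof (induction S rule: infinite_finite_induct)
  case (insert x S)
  then show ?case by (simp add: wdeg_le_mult)
qed (simp_all add: wdeg_le_def)

lemma wdeg_le_subst_monom:
  assumes "\<And>i. wdeg_le w (d i) (F i)"
  shows "wdeg_le w (wdeg_mon d m) (subst_monom F m)"
proof -
  have "wdeg_le w (\<Sum>i\<in>Poly_Mapping.keys m. Poly_Mapping.lookup m i * d i) (subst_monom F m)"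
    unfolding subst_monom_def by (intro wdeg_le_prod wdeg_le_power assms)
  then show ?thesis
    by (simp add: wdeg_mon_def mult.commute)
qed

lemma lookup_weighted_part:
  "Poly_Mapping.lookup (weighted_part w k Q) m = (if wdeg_mon w m = k then Poly_Mapping.lookup Q m else 0)"
proof -
  have "Poly_Mapping.lookup (weighted_part w k Q) m =
      (\<Sum>x\<in>{x\<in>Poly_Mapping.keys Q. wdeg_mon w x = k}. if x = m then Poly_Mapping.lookup Q x else 0)"
    unfolding weighted_part_def by (simp add: lookup_sum lookup_single when_def)
  then show ?thesis
    by (auto simp: sum.delta' in_keys_iff)
qed

lemma keys_weighted_part:
  "Poly_Mapping.keys (weighted_part w k Q) = {m\<in>Poly_Mapping.keys Q. wdeg_mon w m = k}"
  by (auto simp: in_keys_iff lookup_weighted_part split: if_splits)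

lemma weighted_part_add: "weighted_part w k (A + B) = weighted_part w k A + weighted_part w k B"
  by (rule poly_mapping_eqI) (simp add: lookup_weighted_part lookup_add)

lemma weighted_part_sum: "weighted_part w k (sum f S) = (\<Sum>x\<in>S. weighted_part w k (f x))"
  by (rule poly_mapping_eqI) (simp add: lookup_weighted_part lookup_sum)

lemma lookup_Const_mult: "Poly_Mapping.lookup (Const c * X) m = c * Poly_Mapping.lookup X m"
  by (simp add: Const_def mult_map_scale_conv_mult[symmetric] map.rep_eq when_def)

lemma weighted_part_Const_mult: "weighted_part w k (Const c * X) = Const c * weighted_part w k X"
  by (rule poly_mapping_eqI) (simp add: lookup_weighted_part lookup_Const_mult)

lemma weighted_part_eq_self:
  "(\<And>m. m \<in> Poly_Mapping.keys X \<Longrightarrow> wdeg_mon w m = k) \<Longrightarrow> weighted_part w k X = X"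
  by (rule poly_mapping_eqI) (auto simp: lookup_weighted_part in_keys_iff)

lemma weighted_part_eq_0:
  "(\<And>m. m \<in> Poly_Mapping.keys X \<Longrightarrow> wdeg_mon w m \<noteq> k) \<Longrightarrow> weighted_part w k X = 0"
  by (rule poly_mapping_eqI) (auto simp: lookup_weighted_part in_keys_iff)

lemma weighted_part_one: "weighted_part w 0 1 = 1"
  by (rule weighted_part_eq_self) simp

lemma weighted_part_above_wdeg: "wdeg w X < k \<Longrightarrow> weighted_part w k X = 0"
  by (rule weighted_part_eq_0) (metis wdeg_mon_le_wdeg not_le)

lemma wdeg_le_weighted_part: "wdeg_le w k (weighted_part w k X)"
  by (simp add: wdeg_le_def keys_weighted_part)

lemma wdeg_mon_less_keys_diff_weighted_part:
  assumes "wdeg_le w a A" "m \<in> Poly_Mapping.keys (A - weighted_part w a A)"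
  shows "wdeg_mon w m < a"
proof -
  have "wdeg_mon w m \<noteq> a" "m \<in> Poly_Mapping.keys A"
    using assms(2) by (auto simp: lookup_minus lookup_weighted_part in_keys_iff split: if_splits)
  with assms(1) show ?thesis
    unfolding wdeg_le_def by (simp add: order_less_le)
qed

lemma weighted_part_mult_below:
  fixes X Y :: "'a::comm_ring_1 mpoly"
  assumes "wdeg_le w a X" "\<And>m. m \<in> Poly_Mapping.keys Y \<Longrightarrow> wdeg_mon w m < b"
  shows "weighted_part w (a + b) (X * Y) = 0"
proof (rule weighted_part_eq_0)
  fix m assume "m \<in> Poly_Mapping.keys (X * Y)"
  then obtain x y where "x \<in> Poly_Mapping.keys X" "y \<in> Poly_Mapping.keys Y"
    "wdeg_mon w m = wdeg_mon w x + wdeg_mon w y"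
    by (rule keys_mult_wdeg_mon)
  with assms show "wdeg_mon w m \<noteq> a + b"
    unfolding wdeg_le_def by (metis add_le_less_mono order_less_irrefl)
qed

lemma weighted_part_mult:
  fixes A B :: "'a::comm_ring_1 mpoly"
  assumes A: "wdeg_le w a A" and B: "wdeg_le w b B"
  shows "weighted_part w (a + b) (A * B) = weighted_part w a A * weighted_part w b B"
proof -
  define hA where "hA = weighted_part w a A"
  define hB where "hB = weighted_part w b B"
  have "A * B = hA * hB + A * (B - hB) + hB * (A - hA)"
    by (simp add: algebra_simps)
  moreover have "weighted_part w (a + b) (hA * hB) = hA * hB"
  proof (rule weighted_part_eq_self)
    fix m assume "m \<in> Poly_Mapping.keys (hA * hB)"
    then show "wdeg_mon w m = a + b"
      by (rule keys_mult_wdeg_mon[where w = w]) (simp add: hA_def hB_def keys_weighted_part)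
  qed
  moreover have "weighted_part w (a + b) (A * (B - hB)) = 0"
    using A wdeg_mon_less_keys_diff_weighted_part[OF B]
    by (intro weighted_part_mult_below) (auto simp: hB_def)
  moreover have "weighted_part w (b + a) (hB * (A - hA)) = 0"
    using wdeg_le_weighted_part wdeg_mon_less_keys_diff_weighted_part[OF A]
    by (intro weighted_part_mult_below) (auto simp: hA_def hB_def)
  ultimately show ?thesis
    by (simp add: weighted_part_add add.commute hA_def hB_def)
qed

lemma weighted_part_power:
  fixes A :: "'a::comm_ring_1 mpoly"
  assumes "wdeg_le w a A"
  shows "weighted_part w (k * a) (A ^ k) = weighted_part w a A ^ k"
proof (induction k)
  case 0
  show ?case by (simp add: weighted_part_one)
next
  case (Suc k)
  then show ?case
    using weighted_part_mult[OF assms wdeg_le_power[OF assms]] by simp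
qed

lemma weighted_part_prod:
  fixes F :: "nat \<Rightarrow> 'a::comm_ring_1 mpoly"
  assumes "\<And>i. i \<in> S \<Longrightarrow> wdeg_le w (a i) (F i)"
  shows "weighted_part w (\<Sum>i\<in>S. a i) (\<Prod>i\<in>S. F i) = (\<Prod>i\<in>S. weighted_part w (a i) (F i))"
  using assms
proof (induction S rule: infinite_finite_induct)
  case (insert x S)
  then show ?case
    using weighted_part_mult[of w "a x" "F x" "sum a S" "prod F S"] wdeg_le_prod[of S w a F]
    by simp
qed (simp_all add: weighted_part_one)

lemma weighted_part_subst_monom:
  assumes "\<And>i. wdeg_le w (d i) (F i)"
  shows "weighted_part w (wdeg_mon d m) (subst_monom F m) = subst_monom (\<lambda>i. weighted_part w (d i) (F i)) m"
proof -
  have "weighted_part w (\<Sum>i\<in>Poly_Mapping.keys m. Poly_Mapping.lookup m i * d i) (subst_monom F m)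
      = (\<Prod>i\<in>Poly_Mapping.keys m. weighted_part w (Poly_Mapping.lookup m i * d i) (F i ^ Poly_Mapping.lookup m i))"
    unfolding subst_monom_def by (intro weighted_part_prod wdeg_le_power assms)
  also have "\<dots> = subst_monom (\<lambda>i. weighted_part w (d i) (F i)) m"
    unfolding subst_monom_def by (simp add: weighted_part_power assms)
  finally show ?thesis
    by (simp add: wdeg_mon_def mult.commute)
qed

lemma weighted_part_subst:
  assumes F: "\<And>i. wdeg_le w (d i) (F i)" and Q: "wdeg_le d e Q"
  shows "weighted_part w e (subst F Q) = subst (\<lambda>i. weighted_part w (d i) (F i)) (weighted_part d e Q)"
proof -
  let ?hF = "\<lambda>i. weighted_part w (d i) (F i)"
  have monom_part: "weighted_part w e (subst_monom F m) =
      (if wdeg_mon d m = e then subst_monom ?hF m else 0)" if m: "m \<in> Poly_Mapping.keys Q" for m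
  proof (cases "wdeg_mon d m = e")
    case True
    then show ?thesis using weighted_part_subst_monom[of w d F m] F by simp
  next
    case False
    then have "wdeg_mon d m < e" using Q m unfolding wdeg_le_def by force
    moreover have "wdeg_le w (wdeg_mon d m) (subst_monom F m)"
      by (rule wdeg_le_subst_monom) (rule F)
    ultimately have "weighted_part w e (subst_monom F m) = 0"
      unfolding wdeg_le_def by (intro weighted_part_eq_0) (metis order_le_less_trans less_irrefl)
    with False show ?thesis by simp
  qed
  have "weighted_part w e (subst F Q) =
      (\<Sum>m\<in>Poly_Mapping.keys Q. Const (Poly_Mapping.lookup Q m) * weighted_part w e (subst_monom F m))"
    unfolding subst_eq_sum_subst_monom weighted_part_sum weighted_part_Const_mult ..
  also have "\<dots> = (\<Sum>m\<in>{m\<in>Poly_Mapping.keys Q. wdeg_mon d m = e}.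
      Const (Poly_Mapping.lookup Q m) * subst_monom ?hF m)"
    unfolding sum.inter_filter[OF finite_keys] by (intro sum.cong) (simp_all add: monom_part)
  also have "\<dots> = subst ?hF (weighted_part d e Q)"
    unfolding subst_eq_sum_subst_monom keys_weighted_part
    by (intro sum.cong) (auto simp: lookup_weighted_part)
  finally show ?thesis .
qed

lemma deg1_eq_0_imp_Const:
  fixes f :: "'a::comm_ring_1 mpoly"
  assumes "deg1 f = 0"
  shows "f = Const (Poly_Mapping.lookup f 0)"
proof (rule poly_mapping_eqI)
  fix m
  have "m = 0" if "m \<in> Poly_Mapping.keys f"
  proof -
    have "wdeg_mon (\<lambda>_. 1) m = 0"
      using wdeg_mon_le_wdeg[OF that, of "\<lambda>_. 1"] assms by (simp add: deg1_def)
    then show "m = 0"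
      by (simp add: wdeg_mon_def) (metis in_keys_iff lookup_zero poly_mapping_eqI)
  qed
  then show "Poly_Mapping.lookup f m = Poly_Mapping.lookup (Const (Poly_Mapping.lookup f 0)) m"
    by (cases "m = 0") (auto simp: Const_def lookup_single in_keys_iff)
qed

lemma subst_Const: "subst G (Const c) = Const c"
  by (cases "c = 0") (simp_all add: subst_def Const_def)

lemma Const_neq_Var: "Const c \<noteq> (Var i :: 'a::comm_ring_1 mpoly)"
proof
  assume "Const c = (Var i :: 'a mpoly)"
  then have "Poly_Mapping.lookup (Const c :: 'a mpoly) (Poly_Mapping.single i 1) =
      Poly_Mapping.lookup (Var i) (Poly_Mapping.single i 1)"
    by simp
  moreover have "Poly_Mapping.single i (1::nat) \<noteq> 0"
    by (metis lookup_single_eq lookup_zero zero_neq_one)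
  ultimately show False
    by (simp add: Const_def Var_def lookup_single when_def)
qed

lemma poly_automorphism_deg1_pos:
  assumes "poly_automorphism n \<Phi>" "i < n"
  shows "1 \<le> deg1 (\<Phi> i)"
proof (rule ccontr)
  assume "\<not> 1 \<le> deg1 (\<Phi> i)"
  then have "\<Phi> i = Const (Poly_Mapping.lookup (\<Phi> i) 0)"
    by (intro deg1_eq_0_imp_Const) simp
  moreover obtain G where "subst G (\<Phi> i) = Var i"
    using assms unfolding poly_automorphism_def by blast
  ultimately show False
    by (metis subst_Const Const_neq_Var)
qed

theorem corollary3:
  fixes n :: nat and \<Phi> :: "nat \<Rightarrow> 'a::field_char_0 mpoly" and P :: "'a mpoly"
  assumes "alg_closed TYPE('a)"
    and "poly_automorphism n \<Phi>"
    and "in_ring n P"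
    and "deg1 (subst \<Phi> P) = 1"
  shows "deg1 P \<le> 1 \<or>
         (let d = (\<lambda>i. deg1 (\<Phi> i)) in subst (\<lambda>i. hcomp (\<Phi> i)) (lead_form d P) = 0)"
proof -
  define d where "d = (\<lambda>i. deg1 (\<Phi> i))"
  have top_component: "weighted_part (\<lambda>_. 1) (wdeg d P) (subst \<Phi> P) =
      subst (\<lambda>i. hcomp (\<Phi> i)) (lead_form d P)"
    using weighted_part_subst[OF _ wdeg_le_wdeg, of "\<lambda>_. 1" d \<Phi> P]
    by (simp add: d_def deg1_def wdeg_le_wdeg lead_form_eq_weighted_part hcomp_eq_weighted_part)
  show ?thesis
  proof (cases "2 \<le> wdeg d P")
    case True
    then have "weighted_part (\<lambda>_. 1) (wdeg d P) (subst \<Phi> P) = 0"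
      using assms(4) by (intro weighted_part_above_wdeg) (simp add: deg1_def)
    then show ?thesis
      using top_component by (simp add: d_def)
  next
    case False
    have "deg1 P \<le> wdeg d P"
      using assms(2,3) poly_automorphism_deg1_pos
      by (intro deg1_le_wdeg) (auto simp: in_ring_def d_def)
    with False show ?thesis by simp
  qed
qed

end
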